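(* Let $G$ be a $k\times l$ generator matrix of an $A$-code $C$, and suppose that for each $i$ the $i$-th row $g^{(i)}$ of $G$ is monic. Then $(g^{(1)},\ldots,g^{(k)})$ is a basis of divisors of $C$ if and only if the following three conditions hold: (i) $G$ is in echelon form, i.e. $L_{\mathrm{ind}}(g^{(1)})<L_{\mathrm{ind}}(g^{(2)})<\cdots<L_{\mathrm{ind}}(g^{(k)})$; (ii) $L_{\mathrm{coef}}(g^{(i)})$ divides $f(x)$ in $\mathbb{F}[x]$ for every $i$; (iii) for every $i$, $h_i g^{(i)}$ is an $A$-linear combination of $g^{(i+1)},\ldots,g^{(k)}$, where $h_i(x)=f(x)/L_{\mathrm{coef}}(g^{(i)})$. Moreover, the equivalence remains true if condition (iii) is replaced by (iii$'$) $\dim_{\mathbb{F}} C=\sum_{i=1}^k \bigl(m-\deg L_{\mathrm{coef}}(g^{(i)})\bigr)$.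
   Context: Let $\mathbb{F}$ be a finite field, $f(x)\in\mathbb{F}[x]$ a monic polynomial of degree $m$, and $A=\mathbb{F}[x]/\langle f(x)\rangle$; elements of $A$ are identified with polynomials of degree $<m$, arithmetic done modulo $f$. An $A$-code of length $l$ is an $A$-submodule of $A^l$; it is in particular an $\mathbb{F}$-subspace of $A^l\cong\mathbb{F}^{lm}$, whence $\dim_{\mathbb{F}}$. A generator matrix of an $A$-code is a matrix over $A$ whose rows generate it as an $A$-module. For $u=(u_1,\ldots,u_l)\in A^l$, the leading index $L_{\mathrm{ind}}(u)$ is the smallest $i$ with $u_i\neq 0$ ($L_{\mathrm{ind}}(0)=\infty$) and the leading coefficient is $L_{\mathrm{coef}}(u)=u_{L_{\mathrm{ind}}(u)}$; $u$ is monic if $L_{\mathrm{coef}}(u)$ is a monic polynomial. For a nonzero $A$-code $C$, $L_{\mathrm{ind}}(C)=\min\{L_{\mathrm{ind}}(u):u\in C\}$, and $L_{\mathrm{coef}}(C)$ is the monic polynomial $g$ of minimum degree such that some $c\in C$ has $L_{\mathrm{ind}}(c)=L_{\mathrm{ind}}(C)$ and $L_{\mathrm{coef}}(c)=g$; any such $c$ is a leading element of $C$. Set $C^{(1)}=C$ and, while $C^{(n)}\ne 0$, $C^{(n+1)}=\{c\in C^{(n)}: L_{\mathrm{ind}}(c)>L_{\mathrm{ind}}(C^{(n)})\}$; let $k$ be the largest integer with $C^{(k)}\neq 0$. A tuple $(g^{(1)},\ldots,g^{(k)})$ with $g^{(j)}$ a leading element of $C^{(j)}$ for each $j$ is called a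 basis of divisors of $C$. *)

theory Defs
  imports "HOL-Computational_Algebra.Polynomial" "HOL-Library.Extended_Nat"
          "HOL-Library.Function_Algebras"
begin

text \<open>Setting: F is a finite field (type 'a), f a monic polynomial of degree m,
  A = F[x]/(f), elements of A are the polynomials p with p mod f = p
  (i.e. the remainders mod f).  A vector of A^l is a function
  nat => 'a poly, with coordinates indexed 0,...,l-1 and zero outside.\<close>

definition Aelems :: "'a::field poly \<Rightarrow> 'a poly set" where
  "Aelems f = {p. p mod f = p}"

definition Avecs :: "'a::field poly \<Rightarrow> nat \<Rightarrow> (nat \<Rightarrow> 'a poly) set" where
  "Avecs f l = {u. (\<forall>i<l. u i \<in> Aelems f) \<and> (\<forall>i\<ge>l. u i = 0)}"

definition Asmult :: "'a::field poly \<Rightarrow> 'a poly \<Rightarrow> (nat \<Rightarrow> 'a poly) \<Rightarrow> (nat \<Rightarrow> 'a poly)" where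
  "Asmult f a u = (\<lambda>j. (a * u j) mod f)"

definition A_code :: "'a::field poly \<Rightarrow> nat \<Rightarrow> (nat \<Rightarrow> 'a poly) set \<Rightarrow> bool" where
  "A_code f l C \<longleftrightarrow> C \<subseteq> Avecs f l \<and> 0 \<in> C \<and>
     (\<forall>u\<in>C. \<forall>v\<in>C. u + v \<in> C) \<and>
     (\<forall>a\<in>Aelems f. \<forall>u\<in>C. Asmult f a u \<in> C)"

definition Aspan :: "'a::field poly \<Rightarrow> (nat \<Rightarrow> nat \<Rightarrow> 'a poly) \<Rightarrow> nat set \<Rightarrow> (nat \<Rightarrow> 'a poly) set" where
  "Aspan f G I = {(\<lambda>j. (\<Sum>i\<in>I. a i * G i j) mod f) | a. \<forall>i\<in>I. a i \<in> Aelems f}"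

definition generator_matrix :: "'a::field poly \<Rightarrow> nat \<Rightarrow> nat \<Rightarrow> (nat \<Rightarrow> nat \<Rightarrow> 'a poly) \<Rightarrow> (nat \<Rightarrow> 'a poly) set \<Rightarrow> bool" where
  "generator_matrix f k l G C \<longleftrightarrow> A_code f l C \<and> (\<forall>i<k. G i \<in> Avecs f l) \<and> C = Aspan f G {..<k}"

definition dimF :: "(nat \<Rightarrow> 'a::field poly) set \<Rightarrow> nat" where
  "dimF C = vector_space.dim (\<lambda>c u. (\<lambda>j. smult c (u j))) C"

text \<open>Leading index (0-based; \<infinity> for the zero vector) and leading coefficient.\<close>
definition Lind :: "(nat \<Rightarrow> 'a::zero) \<Rightarrow> enat" where
  "Lind u = (if u = 0 then \<infinity> else enat (LEAST i. u i \<noteq> 0))"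

definition Lcoef :: "(nat \<Rightarrow> 'a::zero) \<Rightarrow> 'a" where
  "Lcoef u = u (LEAST i. u i \<noteq> 0)"

definition monic_vec :: "(nat \<Rightarrow> 'a::field poly) \<Rightarrow> bool" where
  "monic_vec u \<longleftrightarrow> u \<noteq> 0 \<and> lead_coeff (Lcoef u) = 1"

definition Lind_code :: "(nat \<Rightarrow> 'a::zero) set \<Rightarrow> enat" where
  "Lind_code C = (INF c\<in>C. Lind c)"

definition leading_element :: "(nat \<Rightarrow> 'a::field poly) set \<Rightarrow> (nat \<Rightarrow> 'a poly) \<Rightarrow> bool" where
  "leading_element C c \<longleftrightarrow> c \<in> C \<and> c \<noteq> 0 \<and> Lind c = Lind_code C \<and> lead_coeff (Lcoef c) = 1 \<and>
     (\<forall>c'\<in>C. c' \<noteq> 0 \<and> Lind c' = Lind_code C \<and> lead_coeff (Lcoef c') = 1 \<longrightarrow>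
        degree (Lcoef c) \<le> degree (Lcoef c'))"

text \<open>subcode C n = C^(n+1) (0-based).\<close>
fun subcode :: "(nat \<Rightarrow> 'a::zero) set \<Rightarrow> nat \<Rightarrow> (nat \<Rightarrow> 'a) set" where
  "subcode C 0 = C"
| "subcode C (Suc n) = {c \<in> subcode C n. Lind c > Lind_code (subcode C n)}"

definition nonzero_code :: "(nat \<Rightarrow> 'a::zero) set \<Rightarrow> bool" where
  "nonzero_code C \<longleftrightarrow> (\<exists>c\<in>C. c \<noteq> 0)"

definition basis_of_divisors :: "(nat \<Rightarrow> 'a::field poly) set \<Rightarrow> nat \<Rightarrow> (nat \<Rightarrow> nat \<Rightarrow> 'a poly) \<Rightarrow> bool" where
  "basis_of_divisors C k g \<longleftrightarrow>
     (\<forall>j<k. nonzero_code (subcode C j)) \<and> \<not> nonzero_code (subcode C k) \<and>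
     (\<forall>j<k. leading_element (subcode C j) (g j))"

end

theory Submission
  imports Defs "HOL-Library.FuncSet"
begin

text \<open>Write \<open>p i\<close> for the pivot (leading index) of row \<open>g i\<close>, \<open>c i\<close> for its leading
  coefficient and \<open>h i = f div c i\<close>.

  If the rows form a basis of divisors, minimality of \<open>deg (c j)\<close> forces \<open>c j\<close> to divide every
  pivot entry of \<open>C^(j)\<close>: otherwise a remainder, made monic, would be a leading coefficient of
  smaller degree. In particular \<open>c j\<close> divides \<open>f\<close>, and \<open>h j g j\<close>, whose pivot entry is \<open>f mod f = 0\<close>,
  lies in \<open>C^(j+1)\<close>, which by descending induction is spanned by the later rows.

  Conversely, for an echelon matrix with \<open>c i dvd f\<close> one has \<open>(a c i) mod f = (a mod h i) c i\<close>.
  Reading pivot entries row by row therefore shows that the combinations \<open>\<Sum> r i g i\<close> with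
  \<open>deg (r i) < deg (h i)\<close> are pairwise distinct; there are \<open>q^(\<Sum> (m - deg (c i)))\<close> of them,
  while \<open>|C| = q^(dim C)\<close>. Condition (iii) lets an element of the span of \<open>g j, g (j+1), ...\<close>
  with vanishing \<open>p j\<close>-entry be moved into the span of \<open>g (j+1), ...\<close>; this identifies
  \<open>C^(j)\<close> with that span, makes \<open>g j\<close> a leading element of it, and shows that the reduced
  combinations exhaust \<open>C\<close>. Conversely, if the count matches they exhaust \<open>C\<close>, and writing
  \<open>h j g j\<close> as a reduced combination, all coefficients up to \<open>j\<close> vanish, which is (iii).\<close>

lemma le_Lind_iff: "x \<le> Lind w \<longleftrightarrow> (\<forall>t. enat t < x \<longrightarrow> w t = 0)"
proof (cases "w = 0")
  case False
  define p where "p = (LEAST t. w t \<noteq> 0)"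
  obtain t0 where "w t0 \<noteq> 0" using False by (auto simp: fun_eq_iff)
  then have "w p \<noteq> 0" unfolding p_def by (rule LeastI)
  moreover have "w t = 0" if "t < p" for t
    using not_less_Least[OF that[unfolded p_def]] by simp
  moreover have "Lind w = enat p" using False by (simp add: Lind_def p_def)
  ultimately show ?thesis
    by (metis enat_ord_simps(2) linorder_not_le order_le_less_trans)
qed (simp add: Lind_def)

lemma enat_less_Lind_iff: "enat n < Lind w \<longleftrightarrow> (\<forall>t\<le>n. w t = 0)"
  using le_Lind_iff[of "enat (Suc n)" w] by (simp add: Suc_ile_eq less_Suc_eq_le)

lemma Lind_eqI:
  assumes "\<forall>t<n. w t = 0" "w n \<noteq> 0"
  shows "Lind w = enat n"
proof -
  have "enat n \<le> Lind w" using assms(1) le_Lind_iff[of "enat n" w] by simp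
  moreover have "\<not> enat n < Lind w" using assms(2) enat_less_Lind_iff by blast
  ultimately show ?thesis by (simp add: order_le_less)
qed

lemma Lind_eq_enatD:
  assumes "Lind w = enat n"
  shows "w n \<noteq> 0" "Lcoef w = w n"
proof -
  have "w \<noteq> 0" "n = (LEAST t. w t \<noteq> 0)" using assms by (auto simp: Lind_def split: if_splits)
  moreover obtain t0 where "w t0 \<noteq> 0" using \<open>w \<noteq> 0\<close> by (auto simp: fun_eq_iff)
  ultimately show "w n \<noteq> 0" "Lcoef w = w n"
    using LeastI[of "\<lambda>t. w t \<noteq> 0" t0] by (simp_all add: Lcoef_def)
qed

lemma Lind_diff: "min (Lind u) (Lind v) \<le> Lind (u - v :: nat \<Rightarrow> 'a::group_add)"
  unfolding le_Lind_iff
  using le_Lind_iff[of "Lind u" u] le_Lind_iff[of "Lind v" v] by auto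

lemma Lind_Asmult: "Lind u \<le> Lind (Asmult f a u)"
  unfolding le_Lind_iff Asmult_def
  using le_Lind_iff[of "Lind u" u] by auto

lemma subcode_antimono: "i \<le> j \<Longrightarrow> subcode C j \<subseteq> subcode C i"
  by (induction j rule: dec_induct) auto

lemma subcode_subset: "subcode C j \<subseteq> C"
  using subcode_antimono[of 0 j C] by simp

lemma Lind_code_le_Lind: "c \<in> D \<Longrightarrow> Lind_code D \<le> Lind c"
  unfolding Lind_code_def by (rule INF_lower)

lemma subcode_diff:
  fixes C :: "(nat \<Rightarrow> 'a::group_add) set"
  assumes "\<And>u v. u \<in> C \<Longrightarrow> v \<in> C \<Longrightarrow> u - v \<in> C"
  shows "u \<in> subcode C j \<Longrightarrow> v \<in> subcode C j \<Longrightarrow> u - v \<in> subcode C j"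
proof (induction j arbitrary: u v)
  case (Suc j)
  have u: "u \<in> subcode C j" "Lind_code (subcode C j) < Lind u" using Suc.prems(1) by auto
  have v: "v \<in> subcode C j" "Lind_code (subcode C j) < Lind v" using Suc.prems(2) by auto
  have "u - v \<in> subcode C j" using u(1) v(1) by (rule Suc.IH)
  moreover have "Lind_code (subcode C j) < Lind (u - v)"
    using u(2) v(2) Lind_diff[of u v] by (meson min_less_iff_conj order_less_le_trans)
  ultimately show ?case unfolding subcode.simps by blast
qed (use assms in simp)

lemma subcode_Asmult:
  assumes "\<And>u. u \<in> C \<Longrightarrow> Asmult f a u \<in> C"
  shows "u \<in> subcode C j \<Longrightarrow> Asmult f a u \<in> subcode C j"
proof (induction j arbitrary: u)
  case (Suc j)
  then show ?case using Lind_Asmult[of u f a] by auto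
qed (use assms in simp)

lemma AspanI: "(\<lambda>t. (\<Sum>i\<in>I. a i * G i t) mod f) \<in> Aspan f G I"
proof -
  have "(\<Sum>i\<in>I. (a i mod f) * G i t) mod f = (\<Sum>i\<in>I. a i * G i t) mod f" for t
  proof -
    have "(\<Sum>i\<in>I. (a i mod f) * G i t) mod f = (\<Sum>i\<in>I. (a i mod f) * G i t mod f) mod f"
      by (simp only: mod_sum_eq)
    also have "\<dots> = (\<Sum>i\<in>I. a i * G i t mod f) mod f"
      by (simp only: mod_mult_left_eq)
    finally show ?thesis by (simp only: mod_sum_eq)
  qed
  then show ?thesis
    unfolding Aspan_def Aelems_def by (intro CollectI exI[of _ "\<lambda>i. a i mod f"]) auto
qed

lemma AspanE:
  assumes "v \<in> Aspan f G I"
  obtains a where "v = (\<lambda>t. (\<Sum>i\<in>I. a i * G i t) mod f)"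
  using assms unfolding Aspan_def by blast

lemma Aspan_diff:
  assumes "u \<in> Aspan f G I" "v \<in> Aspan f G I"
  shows "u - v \<in> Aspan f G I"
proof -
  obtain a where "u = (\<lambda>t. (\<Sum>i\<in>I. a i * G i t) mod f)" using assms(1) by (rule AspanE)
  moreover obtain b where "v = (\<lambda>t. (\<Sum>i\<in>I. b i * G i t) mod f)" using assms(2) by (rule AspanE)
  ultimately have "u - v = (\<lambda>t. (\<Sum>i\<in>I. (a i - b i) * G i t) mod f)"
    by (simp add: fun_eq_iff poly_mod_diff_left left_diff_distrib sum_subtractf)
  then show ?thesis by (simp add: AspanI)
qed

lemma Aspan_add:
  assumes "u \<in> Aspan f G I" "v \<in> Aspan f G I"
  shows "u + v \<in> Aspan f G I"
proof -
  obtain a where "u = (\<lambda>t. (\<Sum>i\<in>I. a i * G i t) mod f)" using assms(1) by (rule AspanE)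
  moreover obtain b where "v = (\<lambda>t. (\<Sum>i\<in>I. b i * G i t) mod f)" using assms(2) by (rule AspanE)
  ultimately have "u + v = (\<lambda>t. (\<Sum>i\<in>I. (a i + b i) * G i t) mod f)"
    by (simp add: fun_eq_iff poly_mod_add_left distrib_right sum.distrib)
  then show ?thesis by (simp add: AspanI)
qed

lemma Aspan_Asmult:
  assumes "u \<in> Aspan f G I"
  shows "Asmult f c u \<in> Aspan f G I"
proof -
  obtain a where "u = (\<lambda>t. (\<Sum>i\<in>I. a i * G i t) mod f)" using assms by (rule AspanE)
  then have "Asmult f c u = (\<lambda>t. (\<Sum>i\<in>I. (c * a i) * G i t) mod f)"
    by (simp add: Asmult_def fun_eq_iff mod_mult_right_eq sum_distrib_left mult.assoc)
  then show ?thesis by (simp add: AspanI)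
qed

lemma Aspan_mono:
  assumes "I \<subseteq> J" "finite J" "v \<in> Aspan f G I"
  shows "v \<in> Aspan f G J"
proof -
  obtain a where a: "v = (\<lambda>t. (\<Sum>i\<in>I. a i * G i t) mod f)" using assms(3) by (rule AspanE)
  have "(\<Sum>i\<in>J. (if i \<in> I then a i else 0) * G i t) = (\<Sum>i\<in>I. a i * G i t)" for t
    using assms(1,2) by (intro sum.mono_neutral_cong_right) auto
  then show ?thesis
    using AspanI[of "\<lambda>i. if i \<in> I then a i else 0" G J f] by (simp add: a)
qed

lemma Aspan_empty: "Aspan f G {} = {0}"
  unfolding Aspan_def by (auto simp: fun_eq_iff)

lemma zero_in_Aspan: "0 \<in> Aspan f G I"
  using AspanI[of "\<lambda>_. 0" G I f] by (simp add: zero_fun_def)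

lemma row_in_Aspan:
  assumes "finite I" "j \<in> I" "\<And>t. G j t mod f = G j t"
  shows "G j \<in> Aspan f G I"
proof -
  have "(\<Sum>i\<in>I. (if i = j then 1 else 0) * G i t) = G j t" for t
  proof -
    have "(\<Sum>i\<in>I. (if i = j then 1 else 0) * G i t) = (\<Sum>i\<in>I. if i = j then G i t else 0)"
      by (rule sum.cong) auto
    then show ?thesis using assms(1,2) by simp
  qed
  then show ?thesis
    using AspanI[of "\<lambda>i. if i = j then 1 else 0" G I f] assms(3) by simp
qed

lemma Aspan_vanishes:
  assumes "v \<in> Aspan f G I" "\<And>i. i \<in> I \<Longrightarrow> G i t = 0"
  shows "v t = 0"
proof -
  obtain a where "v = (\<lambda>t. (\<Sum>i\<in>I. a i * G i t) mod f)" using assms(1) by (rule AspanE)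
  then show ?thesis using assms(2) by simp
qed

lemma coeff_sum_monom_lessThan:
  "coeff (\<Sum>e<n. monom (c e) e) i = (if i < n then c i else 0)"
  by (simp add: coeff_sum coeff_monom)

lemma Aelems_iff: "g \<noteq> 0 \<Longrightarrow> p \<in> Aelems g \<longleftrightarrow> p = 0 \<or> degree p < degree g"
  unfolding Aelems_def using degree_mod_less[of g p] mod_poly_less[of p g] by auto

lemma card_Aelems:
  fixes g :: "'a::{finite,field} poly"
  assumes "g \<noteq> 0"
  shows "card (Aelems g) = card (UNIV :: 'a set) ^ degree g"
proof -
  define n where "n = degree g"
  define \<psi> :: "(nat \<Rightarrow> 'a) \<Rightarrow> 'a poly" where "\<psi> c = (\<Sum>e<n. monom (c e) e)" for c
  have inj: "inj_on \<psi> ({..<n} \<rightarrow>\<^sub>E UNIV)"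
  proof (rule inj_onI)
    fix c c' assume c: "c \<in> {..<n} \<rightarrow>\<^sub>E UNIV" and c': "c' \<in> {..<n} \<rightarrow>\<^sub>E UNIV" and "\<psi> c = \<psi> c'"
    then have coeff_eq: "coeff (\<psi> c) i = coeff (\<psi> c') i" for i by simp
    show "c = c'"
    proof (rule PiE_ext[OF c c'])
      fix i assume "i \<in> {..<n}"
      then show "c i = c' i" using coeff_eq[of i] by (simp add: \<psi>_def coeff_sum_monom_lessThan)
    qed
  qed
  have "\<psi> ` ({..<n} \<rightarrow>\<^sub>E UNIV) = Aelems g"
  proof (intro equalityI subsetI)
    fix p assume "p \<in> \<psi> ` ({..<n} \<rightarrow>\<^sub>E UNIV)"
    then obtain c where "p = \<psi> c" by blast
    then have "\<forall>i\<ge>n. coeff p i = 0" by (simp add: \<psi>_def coeff_sum_monom_lessThan)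
    then have "p = 0 \<or> degree p < n" using degree_lessI[of p n] by auto
    then show "p \<in> Aelems g" using Aelems_iff[OF assms] by (simp add: n_def)
  next
    fix p assume "p \<in> Aelems g"
    then have "p = 0 \<or> degree p < n" using Aelems_iff[OF assms] by (simp add: n_def)
    then have "p = \<psi> (restrict (coeff p) {..<n})"
      by (auto simp: \<psi>_def poly_eq_iff coeff_sum_monom_lessThan coeff_eq_0)
    then show "p \<in> \<psi> ` ({..<n} \<rightarrow>\<^sub>E UNIV)"
      by (intro image_eqI[of _ \<psi> "restrict (coeff p) {..<n}"]) auto
  qed
  then have "card (Aelems g) = card ({..<n} \<rightarrow>\<^sub>E (UNIV :: 'a set))"
    using card_image[OF inj] by simp
  then show ?thesis by (simp add: card_PiE n_def)
qed

lemma finite_Aelems: "(g :: 'a::{finite,field} poly) \<noteq> 0 \<Longrightarrow> finite (Aelems g)"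
  using card_Aelems[of g] by (intro card_ge_0_finite) (simp add: finite_UNIV_card_ge_0)

lemma finite_Avecs:
  assumes "(f :: 'a::{finite,field} poly) \<noteq> 0"
  shows "finite (Avecs f l)"
proof (rule inj_on_finite)
  show "inj_on (\<lambda>u. restrict u {..<l}) (Avecs f l)"
  proof (rule inj_onI)
    fix u v assume "u \<in> Avecs f l" "v \<in> Avecs f l" and eq: "restrict u {..<l} = restrict v {..<l}"
    show "u = v"
    proof
      fix t show "u t = v t"
        using \<open>u \<in> Avecs f l\<close> \<open>v \<in> Avecs f l\<close> fun_cong[OF eq, of t]
        by (cases "t < l") (auto simp: Avecs_def)
    qed
  qed
  show "(\<lambda>u. restrict u {..<l}) ` Avecs f l \<subseteq> {..<l} \<rightarrow>\<^sub>E Aelems f"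
    by (simp add: Avecs_def image_subset_iff restrict_PiE_iff)
  show "finite ({..<l} \<rightarrow>\<^sub>E Aelems f)"
    using finite_Aelems[OF assms] by (intro finite_PiE) auto
qed

lemma card_finite_subspace:
  fixes scale :: "'a::{finite,field} \<Rightarrow> 'b::ab_group_add \<Rightarrow> 'b"
  assumes "vector_space scale" and "finite V" and "module.subspace scale V"
  shows "card V = card (UNIV :: 'a set) ^ vector_space.dim scale V"
proof -
  interpret vs: vector_space scale by fact
  obtain B where B: "B \<subseteq> V" "vs.independent B" "V \<subseteq> vs.span B" "card B = vs.dim V"
    by (rule vs.basis_exists)
  have finB: "finite B" using B(1) assms(2) by (rule finite_subset)
  define \<Theta> where "\<Theta> g = (\<Sum>v\<in>B. scale (g v) v)" for g
  have "\<Theta> ` (B \<rightarrow>\<^sub>E UNIV) = range \<Theta>"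
  proof (intro equalityI subsetI)
    fix x assume "x \<in> range \<Theta>"
    then obtain u where "x = \<Theta> u" by blast
    moreover have "\<Theta> (restrict u B) = \<Theta> u" unfolding \<Theta>_def by (rule sum.cong) auto
    ultimately show "x \<in> \<Theta> ` (B \<rightarrow>\<^sub>E UNIV)" by (intro image_eqI[of _ _ "restrict u B"]) auto
  qed auto
  also have "\<dots> = vs.span B" using vs.span_finite[OF finB] by (simp add: \<Theta>_def)
  also have "\<dots> = V" by (rule equalityI[OF vs.span_minimal[OF B(1) assms(3)] B(3)])
  finally have img: "\<Theta> ` (B \<rightarrow>\<^sub>E UNIV) = V" .
  have "inj_on \<Theta> (B \<rightarrow>\<^sub>E UNIV)"
  proof (rule inj_onI)
    fix g g' assume g: "g \<in> B \<rightarrow>\<^sub>E UNIV" and g': "g' \<in> B \<rightarrow>\<^sub>E UNIV" and "\<Theta> g = \<Theta> g'"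
    then have "(\<Sum>v\<in>B. scale (g v - g' v) v) = 0"
      by (simp add: \<Theta>_def vs.scale_left_diff_distrib sum_subtractf)
    then have z: "(\<Sum>v\<in>B. scale (g v - g' v) v) = 0" .
    have "g v - g' v = 0" if "v \<in> B" for v
    proof (rule ccontr)
      assume "g v - g' v \<noteq> 0"
      with \<open>v \<in> B\<close> z have "vs.dependent B"
        unfolding vs.dependent_finite[OF finB] by (intro exI[where x="\<lambda>v. g v - g' v"]) auto
      then show False using B(2) by contradiction
    qed
    then show "g = g'" using g g' by (intro PiE_ext) auto
  qed
  then have "card V = card (B \<rightarrow>\<^sub>E (UNIV :: 'a set))" using card_image img by metis
  then show ?thesis using B(4) finB by (simp add: card_PiE)
qed

lemma vector_space_coeffwise: "vector_space (\<lambda>c (u :: nat \<Rightarrow> 'a::field poly) j. smult c (u j))"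
  by unfold_locales (auto simp: fun_eq_iff smult_add_right smult_add_left)

lemma card_A_code:
  fixes f :: "'a::{finite,field} poly"
  assumes "f \<noteq> 0" and code: "A_code f l C"
  shows "card C = card (UNIV :: 'a set) ^ dimF C"
proof -
  interpret vs: vector_space "\<lambda>c (u :: nat \<Rightarrow> 'a poly) j. smult c (u j)"
    by (rule vector_space_coeffwise)
  have sub: "C \<subseteq> Avecs f l" using code by (simp add: A_code_def)
  have "vs.subspace C"
  proof (rule vs.subspaceI)
    show "0 \<in> C" "\<And>u v. u \<in> C \<Longrightarrow> v \<in> C \<Longrightarrow> u + v \<in> C" using code by (auto simp: A_code_def)
    fix c u assume "u \<in> C"
    then have "u j mod f = u j" for j
      using sub by (cases "j < l") (auto simp: Avecs_def Aelems_def)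
    then have "(\<lambda>j. smult c (u j)) = Asmult f ([:c:] mod f) u"
      by (simp add: Asmult_def fun_eq_iff mod_mult_left_eq mod_smult_left)
    moreover have "[:c:] mod f \<in> Aelems f" by (simp add: Aelems_def)
    ultimately show "(\<lambda>j. smult c (u j)) \<in> C" using code \<open>u \<in> C\<close> by (simp add: A_code_def)
  qed
  moreover have "finite C" using finite_Avecs[OF assms(1)] sub by (rule finite_subset[rotated])
  ultimately show ?thesis
    unfolding dimF_def using card_finite_subspace[OF vector_space_coeffwise] by blast
qed

locale monic_generator_matrix =
  fixes f :: "'a::{finite,field} poly" and k l :: nat
    and G :: "nat \<Rightarrow> nat \<Rightarrow> 'a poly" and C :: "(nat \<Rightarrow> 'a poly) set"
  assumes monic_f: "lead_coeff f = 1"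
    and generator: "generator_matrix f k l G C"
    and monic_rows: "\<And>i. i < k \<Longrightarrow> monic_vec (G i)"
begin

abbreviation pivot :: "nat \<Rightarrow> nat" where "pivot i \<equiv> LEAST t. G i t \<noteq> 0"

abbreviation lc :: "nat \<Rightarrow> 'a poly" where "lc i \<equiv> Lcoef (G i)"

lemma f_nonzero: "f \<noteq> 0"
  using monic_f by auto

lemma C_eq: "C = Aspan f G {..<k}"
  using generator by (simp add: generator_matrix_def)

lemma A_code_C: "A_code f l C"
  using generator unfolding generator_matrix_def by blast

lemma Avecs_mod: "u \<in> Avecs f l \<Longrightarrow> u t mod f = u t"
  unfolding Avecs_def Aelems_def by (cases "t < l") auto

lemma row_mod: "i < k \<Longrightarrow> G i t mod f = G i t"
  using generator Avecs_mod by (auto simp: generator_matrix_def)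

lemma code_mod: "u \<in> C \<Longrightarrow> u t mod f = u t"
  using A_code_C Avecs_mod by (auto simp: A_code_def)

lemma subcode_mod: "u \<in> subcode C j \<Longrightarrow> u t mod f = u t"
  using subcode_subset code_mod by blast

lemma row_in_span: "finite I \<Longrightarrow> j \<in> I \<Longrightarrow> j < k \<Longrightarrow> G j \<in> Aspan f G I"
  by (rule row_in_Aspan) (auto simp: row_mod)

lemma row_nonzero: "i < k \<Longrightarrow> G i \<noteq> 0"
  using monic_rows by (auto simp: monic_vec_def)

lemma Lind_row: "i < k \<Longrightarrow> Lind (G i) = enat (pivot i)"
  using row_nonzero by (simp add: Lind_def)

lemma row_before_pivot: "t < pivot i \<Longrightarrow> G i t = 0"
  using not_less_Least by blast

lemma lc_eq: "lc i = G i (pivot i)"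
  by (simp add: Lcoef_def)

lemma lc_monic: "i < k \<Longrightarrow> lead_coeff (lc i) = 1"
  using monic_rows by (auto simp: monic_vec_def)

lemma lc_nonzero: "i < k \<Longrightarrow> lc i \<noteq> 0"
  using lc_monic by fastforce

lemma degree_lc_less: "i < k \<Longrightarrow> degree (lc i) < degree f"
  using degree_mod_less[OF f_nonzero, of "lc i"] row_mod[of i "pivot i"] lc_nonzero[of i]
  by (simp add: lc_eq)

lemma diff_in_subcode: "u \<in> subcode C j \<Longrightarrow> v \<in> subcode C j \<Longrightarrow> u - v \<in> subcode C j"
  by (rule subcode_diff) (simp_all add: C_eq Aspan_diff)

lemma Asmult_in_subcode: "u \<in> subcode C j \<Longrightarrow> Asmult f a u \<in> subcode C j"
  by (rule subcode_Asmult) (simp_all add: C_eq Aspan_Asmult)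

context
  assumes basis: "basis_of_divisors C k G"
begin

lemma leading_element_subcode: "j < k \<Longrightarrow> leading_element (subcode C j) (G j)"
  using basis by (simp add: basis_of_divisors_def)

lemma row_in_subcode: "j < k \<Longrightarrow> G j \<in> subcode C j"
  using leading_element_subcode by (simp add: leading_element_def)

lemma Lind_code_subcode: "j < k \<Longrightarrow> Lind_code (subcode C j) = enat (pivot j)"
  using leading_element_subcode Lind_row by (simp add: leading_element_def)

lemma subcode_before_pivot:
  assumes "j < k" "v \<in> subcode C j" "t < pivot j"
  shows "v t = 0"
  using Lind_code_le_Lind[OF assms(2)] Lind_code_subcode[OF assms(1)] assms(3)
  by (simp add: le_Lind_iff)

lemma subcode_SucI:
  assumes "j < k" "v \<in> subcode C j" "v (pivot j) = 0"
  shows "v \<in> subcode C (Suc j)"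
proof -
  have "\<forall>t\<le>pivot j. v t = 0" using subcode_before_pivot[OF assms(1,2)] assms(3) le_neq_implies_less by blast
  then show ?thesis using assms(2) Lind_code_subcode[OF assms(1)] by (simp add: enat_less_Lind_iff)
qed

lemma subcode_pivot_entry_eq_0:
  assumes j: "j < k" and e: "e \<in> subcode C j" and deg: "degree (e (pivot j)) < degree (lc j)"
  shows "e (pivot j) = 0"
proof (rule ccontr)
  let ?r = "e (pivot j)"
  assume r: "?r \<noteq> 0"
  define c where "c = inverse (lead_coeff ?r)"
  define e' where "e' = Asmult f [:c:] e"
  have e'_in: "e' \<in> subcode C j" unfolding e'_def by (rule Asmult_in_subcode[OF e])
  have "degree (smult c ?r) < degree f" using deg degree_lc_less[OF j] by simp
  then have e'_pivot: "e' (pivot j) = smult c ?r" by (simp add: e'_def Asmult_def mod_poly_less)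
  have "c \<noteq> 0" using r by (simp add: c_def)
  then have "Lind e' = enat (pivot j)"
    using e'_pivot r subcode_before_pivot[OF j e'_in] by (intro Lind_eqI) auto
  then have "e' \<noteq> 0" "Lind e' = Lind_code (subcode C j)" "Lcoef e' = smult c ?r"
    using Lind_eq_enatD[of e'] e'_pivot Lind_code_subcode[OF j] by auto
  moreover have "lead_coeff (smult c ?r) = 1" using r by (simp add: c_def)
  ultimately have "degree (lc j) \<le> degree (smult c ?r)"
    using leading_element_subcode[OF j] e'_in unfolding leading_element_def by metis
  then show False using deg \<open>c \<noteq> 0\<close> by simp
qed

lemma lc_dvd_subcode_pivot:
  assumes j: "j < k" and v: "v \<in> subcode C j"
  shows "lc j dvd v (pivot j)"
proof -
  let ?y = "v (pivot j)"
  define e where "e = v - Asmult f (?y div lc j) (G j)"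
  have e_in: "e \<in> subcode C j"
    unfolding e_def using v row_in_subcode[OF j] by (intro diff_in_subcode Asmult_in_subcode)
  have "e (pivot j) = (?y - ?y div lc j * lc j) mod f"
    using subcode_mod[OF v]
    by (simp add: e_def Asmult_def lc_eq poly_mod_diff_left)
  also have "?y - ?y div lc j * lc j = ?y mod lc j" by (simp add: minus_div_mult_eq_mod)
  finally have "e (pivot j) = ?y mod lc j"
    using degree_mod_less[OF lc_nonzero[OF j], of ?y] degree_lc_less[OF j] by (auto intro: mod_poly_less)
  moreover have "?y mod lc j = 0 \<or> degree (?y mod lc j) < degree (lc j)"
    using degree_mod_less[OF lc_nonzero[OF j]] by blast
  ultimately have "?y mod lc j = 0" using subcode_pivot_entry_eq_0[OF j e_in] by auto
  then show ?thesis by (simp add: dvd_eq_mod_eq_0)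
qed

lemma basis_of_divisors_lc_dvd_f:
  assumes j: "j < k"
  shows "lc j dvd f"
proof -
  define e where "e = Asmult f (f div lc j) (G j)"
  have e_in: "e \<in> subcode C j" unfolding e_def by (rule Asmult_in_subcode[OF row_in_subcode[OF j]])
  have "e (pivot j) = (f - f mod lc j) mod f" by (simp add: e_def Asmult_def lc_eq minus_mod_eq_div_mult)
  also have "\<dots> = - (f mod lc j)"
    using degree_mod_less[OF lc_nonzero[OF j], of f] degree_lc_less[OF j]
    by (auto simp: poly_mod_diff_left intro: mod_poly_less)
  finally have "e (pivot j) = - (f mod lc j)" .
  moreover have "f mod lc j = 0 \<or> degree (f mod lc j) < degree (lc j)"
    using degree_mod_less[OF lc_nonzero[OF j]] by blast
  ultimately have "f mod lc j = 0" using subcode_pivot_entry_eq_0[OF j e_in] by auto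
  then show ?thesis by (simp add: dvd_eq_mod_eq_0)
qed

lemma basis_of_divisors_pivot_less:
  assumes "i < j" "j < k"
  shows "pivot i < pivot j"
proof -
  have "G j \<in> subcode C (Suc i)"
    using row_in_subcode[OF assms(2)] subcode_antimono[of "Suc i" j C] assms(1) by auto
  then have "Lind_code (subcode C i) < Lind (G j)" by simp
  then show ?thesis using Lind_code_subcode[of i] Lind_row[OF assms(2)] assms by simp
qed

lemma subcode_subset_Aspan: "j \<le> k \<Longrightarrow> subcode C j \<subseteq> Aspan f G {j..<k}"
proof (induction j rule: inc_induct)
  case base
  have "\<not> nonzero_code (subcode C k)" using basis by (simp add: basis_of_divisors_def)
  then show ?case by (auto simp: nonzero_code_def zero_in_Aspan)
next
  case (step n)
  show ?case
  proof
    fix c assume c: "c \<in> subcode C n"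
    obtain a where a: "c (pivot n) = lc n * a" using lc_dvd_subcode_pivot[OF step(2) c] by (auto elim: dvdE)
    define c' where "c' = c - Asmult f a (G n)"
    have "c' \<in> subcode C n"
      unfolding c'_def using c row_in_subcode[OF step(2)] by (intro diff_in_subcode Asmult_in_subcode)
    moreover have "c' (pivot n) = 0"
    proof -
      have "(a * lc n) mod f = c (pivot n)" using subcode_mod[OF c, of "pivot n"] a by (simp add: mult.commute)
      then show ?thesis by (simp add: c'_def Asmult_def lc_eq)
    qed
    ultimately have "c' \<in> Aspan f G {Suc n..<k}" using subcode_SucI[OF step(2)] step(3) by blast
    then have "c' \<in> Aspan f G {n..<k}" by (rule Aspan_mono[rotated 2]) auto
    moreover have "Asmult f a (G n) \<in> Aspan f G {n..<k}"
      using step(2) by (intro Aspan_Asmult row_in_span) auto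
    ultimately show "c \<in> Aspan f G {n..<k}" using Aspan_add unfolding c'_def by fastforce
  qed
qed

lemma basis_of_divisors_h_row_in_later_span:
  assumes j: "j < k"
  shows "Asmult f (f div lc j) (G j) \<in> Aspan f G {j<..<k}"
proof -
  define e where "e = Asmult f (f div lc j) (G j)"
  have "e \<in> subcode C j" unfolding e_def by (rule Asmult_in_subcode[OF row_in_subcode[OF j]])
  moreover have "e (pivot j) = 0"
    using basis_of_divisors_lc_dvd_f[OF j] by (simp add: e_def Asmult_def lc_eq)
  ultimately have "e \<in> subcode C (Suc j)" by (rule subcode_SucI[OF j])
  then show ?thesis
    using subcode_subset_Aspan[of "Suc j"] j by (auto simp: e_def atLeastSucLessThan_greaterThanLessThan)
qed

end

end

locale echelon_generator_matrix = monic_generator_matrix +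
  assumes pivot_less: "\<And>i j. i < j \<Longrightarrow> j < k \<Longrightarrow> pivot i < pivot j"
    and lc_dvd_f: "\<And>i. i < k \<Longrightarrow> lc i dvd f"
begin

abbreviation h :: "nat \<Rightarrow> 'a poly" where "h i \<equiv> f div lc i"

lemma h_mult_lc: "i < k \<Longrightarrow> h i * lc i = f"
  using lc_dvd_f by simp

lemma h_nonzero: "i < k \<Longrightarrow> h i \<noteq> 0"
  using h_mult_lc f_nonzero by fastforce

lemma degree_h:
  assumes "i < k"
  shows "degree (h i) = degree f - degree (lc i)"
proof -
  have "degree f = degree (h i) + degree (lc i)"
    using degree_mult_eq[OF h_nonzero lc_nonzero, OF assms assms] h_mult_lc[OF assms] by simp
  then show ?thesis by simp
qed

text \<open>Multiplication by the leading coefficient embeds \<open>F[x]/(h i)\<close> into \<open>A\<close>.\<close>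
lemma mult_lc_mod:
  assumes i: "i < k"
  shows "(a * lc i) mod f = (a mod h i) * lc i"
proof -
  have "a * lc i = (a div h i * h i + a mod h i) * lc i" by (simp only: div_mult_mod_eq)
  also have "\<dots> = (a div h i) * (h i * lc i) + (a mod h i) * lc i" by (simp only: distrib_right mult.assoc)
  finally have "a * lc i = (a div h i) * f + (a mod h i) * lc i" by (simp only: h_mult_lc[OF i])
  then have "(a * lc i) mod f = ((a mod h i) * lc i) mod f" by simp
  also have "\<dots> = (a mod h i) * lc i"
  proof (cases "a mod h i = 0")
    case False
    have "degree (a mod h i) < degree (h i)" by (rule degree_mod_less'[OF h_nonzero[OF i] False])
    then have "degree ((a mod h i) * lc i) < degree f"
      using degree_mult_eq[OF False lc_nonzero[OF i]] degree_h[OF i] degree_lc_less[OF i] by simp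
    then show ?thesis by (rule mod_poly_less)
  qed simp
  finally show ?thesis .
qed

lemma later_row_at_pivot: "i < j \<Longrightarrow> j < k \<Longrightarrow> G j (pivot i) = 0"
  by (rule row_before_pivot) (rule pivot_less)

lemma sum_rows_at_pivot:
  assumes "finite I" "I \<subseteq> {..<k}" "j \<in> I" "\<And>i. i \<in> I \<Longrightarrow> i < j \<Longrightarrow> a i = 0"
  shows "(\<Sum>i\<in>I. a i * G i (pivot j)) = a j * lc j"
proof -
  have "(\<Sum>i\<in>I. a i * G i (pivot j)) = a j * G j (pivot j) + (\<Sum>i\<in>I - {j}. a i * G i (pivot j))"
    by (rule sum.remove[OF assms(1,3)])
  also have "(\<Sum>i\<in>I - {j}. a i * G i (pivot j)) = 0"
  proof (rule sum.neutral, rule ballI)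
    fix i assume i: "i \<in> I - {j}"
    then have "i < k" using assms(2) by auto
    then show "a i * G i (pivot j) = 0"
      using i assms(4) later_row_at_pivot[of j i] by (cases "i < j") auto
  qed
  finally show ?thesis by (simp add: lc_eq)
qed

lemma Aspan_from_pivot_entry:
  assumes "j < k"
  shows "(\<Sum>i\<in>{j..<k}. a i * G i (pivot j)) mod f = (a j mod h j) * lc j"
proof -
  have "(\<Sum>i\<in>{j..<k}. a i * G i (pivot j)) = a j * lc j"
    by (rule sum_rows_at_pivot) (use assms in auto)
  then show ?thesis by (simp add: mult_lc_mod[OF assms])
qed

lemma Aspan_from_before_pivot:
  assumes "j < k" "v \<in> Aspan f G {j..<k}" "t < pivot j"
  shows "v t = 0"
  using assms(2)
proof (rule Aspan_vanishes)
  fix i assume i: "i \<in> {j..<k}"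
  have "t < pivot i"
  proof (cases "i = j")
    case False
    with i have "pivot j < pivot i" by (intro pivot_less) auto
    with assms(3) show ?thesis by simp
  qed (use assms(3) in simp)
  then show "G i t = 0" by (rule row_before_pivot)
qed

lemma Lind_code_Aspan_from:
  assumes j: "j < k"
  shows "Lind_code (Aspan f G {j..<k}) = enat (pivot j)"
proof (rule antisym)
  show "Lind_code (Aspan f G {j..<k}) \<le> enat (pivot j)"
    using Lind_code_le_Lind[OF row_in_span[of "{j..<k}" j]] Lind_row j by simp
  show "enat (pivot j) \<le> Lind_code (Aspan f G {j..<k})"
    unfolding Lind_code_def
    by (rule INF_greatest) (use Aspan_from_before_pivot[OF j] in \<open>auto simp: le_Lind_iff\<close>)
qed

lemma lc_dvd_Aspan_from_pivot:
  assumes "j < k" "v \<in> Aspan f G {j..<k}"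
  shows "lc j dvd v (pivot j)"
proof -
  obtain a where "v = (\<lambda>t. (\<Sum>i\<in>{j..<k}. a i * G i t) mod f)" using assms(2) by (rule AspanE)
  then show ?thesis using Aspan_from_pivot_entry[OF assms(1), of a] by simp
qed

lemma leading_element_Aspan_from:
  assumes j: "j < k"
  shows "leading_element (Aspan f G {j..<k}) (G j)"
  unfolding leading_element_def
proof (intro conjI ballI impI)
  fix c assume c: "c \<in> Aspan f G {j..<k}"
    and "c \<noteq> 0 \<and> Lind c = Lind_code (Aspan f G {j..<k}) \<and> lead_coeff (Lcoef c) = 1"
  then have "Lind c = enat (pivot j)" using Lind_code_Aspan_from[OF j] by simp
  then have "c (pivot j) \<noteq> 0" "Lcoef c = c (pivot j)" by (rule Lind_eq_enatD)+
  then show "degree (lc j) \<le> degree (Lcoef c)"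
    using lc_dvd_Aspan_from_pivot[OF j c] dvd_imp_degree_le by metis
qed (use j row_in_span row_nonzero Lind_code_Aspan_from Lind_row lc_monic in auto)

definition lincomb :: "(nat \<Rightarrow> 'a poly) \<Rightarrow> nat \<Rightarrow> 'a poly" where
  "lincomb r = (\<lambda>t. (\<Sum>i<k. r i * G i t) mod f)"

definition reduced_coeffs :: "(nat \<Rightarrow> 'a poly) set" where
  "reduced_coeffs = (\<Pi>\<^sub>E i\<in>{..<k}. Aelems (h i))"

lemma lincomb_in_C: "lincomb r \<in> C"
  unfolding lincomb_def C_eq by (rule AspanI)

lemma lincomb_upd_add:
  assumes "n < k"
  shows "lincomb (r(n := r n + x)) = lincomb r + Asmult f x (G n)"
proof
  fix t
  have "(\<Sum>i<k. (r(n := r n + x)) i * G i t) = (\<Sum>i<k. r i * G i t + (if i = n then x * G i t else 0))"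
    by (rule sum.cong) (auto simp: distrib_right)
  also have "\<dots> = (\<Sum>i<k. r i * G i t) + x * G n t" using assms by (simp add: sum.distrib)
  finally show "lincomb (r(n := r n + x)) t = (lincomb r + Asmult f x (G n)) t"
    by (simp add: lincomb_def Asmult_def poly_mod_add_left)
qed

lemma coeffs_eq_0_if_lincomb_vanishes_at_pivots:
  assumes red: "\<And>i. i < k \<Longrightarrow> r i mod h i = r i" and j: "j < k"
    and zero: "\<And>i. i \<le> j \<Longrightarrow> lincomb r (pivot i) = 0"
  shows "i \<le> j \<Longrightarrow> r i = 0"
proof (induction i rule: less_induct)
  case (less i)
  then have i: "i < k" using j by simp
  have "lincomb r (pivot i) = (r i * lc i) mod f"
    using sum_rows_at_pivot[of "{..<k}" i r] i less by (simp add: lincomb_def)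
  also have "\<dots> = r i * lc i" using mult_lc_mod[OF i] red[OF i] by simp
  finally have "r i * lc i = 0" using zero[OF less.prems] by simp
  then show "r i = 0" using lc_nonzero[OF i] by simp
qed

lemma inj_on_lincomb: "inj_on lincomb reduced_coeffs"
proof (rule inj_onI)
  fix r r' assume r: "r \<in> reduced_coeffs" and r': "r' \<in> reduced_coeffs" and eq: "lincomb r = lincomb r'"
  have "lincomb (\<lambda>i. r i - r' i) = lincomb r - lincomb r'"
    by (simp add: lincomb_def fun_eq_iff poly_mod_diff_left left_diff_distrib sum_subtractf)
  then have zero: "lincomb (\<lambda>i. r i - r' i) t = 0" for t using eq by simp
  have red: "(r i - r' i) mod h i = r i - r' i" if "i < k" for i
    using r r' that by (simp add: reduced_coeffs_def Aelems_def PiE_iff poly_mod_diff_left)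
  have "r i = r' i" if "i < k" for i
    using coeffs_eq_0_if_lincomb_vanishes_at_pivots[of "\<lambda>i. r i - r' i" i i, OF red _ zero] that by simp
  then show "r = r'" using r r' unfolding reduced_coeffs_def by (intro PiE_ext) auto
qed

lemma card_lincomb_image:
  "card (lincomb ` reduced_coeffs) = card (UNIV :: 'a set) ^ (\<Sum>i<k. degree f - degree (lc i))"
proof -
  have "card (lincomb ` reduced_coeffs) = card reduced_coeffs" by (rule card_image[OF inj_on_lincomb])
  also have "\<dots> = (\<Prod>i<k. card (Aelems (h i)))" by (simp add: reduced_coeffs_def card_PiE)
  also have "\<dots> = (\<Prod>i<k. card (UNIV :: 'a set) ^ (degree f - degree (lc i)))"
    by (rule prod.cong) (simp_all add: card_Aelems h_nonzero degree_h)
  finally show ?thesis by (simp add: power_sum)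
qed

lemma h_row_in_later_span_if_lincomb_onto:
  assumes onto: "C \<subseteq> lincomb ` reduced_coeffs" and j: "j < k"
  shows "Asmult f (h j) (G j) \<in> Aspan f G {j<..<k}"
proof -
  define x where "x = Asmult f (h j) (G j)"
  have "x \<in> C" unfolding x_def C_eq by (intro Aspan_Asmult row_in_span) (use j in auto)
  then obtain r where r: "r \<in> reduced_coeffs" "x = lincomb r" using onto by blast
  have "x (pivot i) = 0" if "i \<le> j" for i
  proof (cases "i = j")
    case True then show ?thesis using h_mult_lc[OF j] by (simp add: x_def Asmult_def lc_eq)
  next
    case False then show ?thesis using that later_row_at_pivot[of i j] j by (simp add: x_def Asmult_def)
  qed
  moreover have "r i mod h i = r i" if "i < k" for i
    using r(1) that by (auto simp: reduced_coeffs_def Aelems_def)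
  ultimately have "r i = 0" if "i \<le> j" for i
    using coeffs_eq_0_if_lincomb_vanishes_at_pivots[OF _ j] r(2) that by blast
  then have "x = (\<lambda>t. (\<Sum>i\<in>{Suc j..<k}. r i * G i t) mod f)"
    unfolding r(2) lincomb_def by (intro ext arg_cong[where f="\<lambda>p. p mod f"] sum.mono_neutral_right) auto
  then show ?thesis using AspanI[of r G "{Suc j..<k}" f]
    by (simp add: x_def atLeastSucLessThan_greaterThanLessThan)
qed

context
  assumes h_rows: "\<And>i. i < k \<Longrightarrow> Asmult f (h i) (G i) \<in> Aspan f G {i<..<k}"
begin

lemma Aspan_from_SucI:
  assumes j: "j < k" and w: "w \<in> Aspan f G {j..<k}" and w0: "w (pivot j) = 0"
  shows "w \<in> Aspan f G {Suc j..<k}"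
proof -
  obtain a where a: "w = (\<lambda>t. (\<Sum>i\<in>{j..<k}. a i * G i t) mod f)" using w by (rule AspanE)
  have "a j mod h j = 0" using w0 Aspan_from_pivot_entry[OF j, of a] lc_nonzero[OF j] by (simp add: a)
  then have "h j dvd a j" by (simp add: dvd_eq_mod_eq_0)
  then obtain q where "a j = h j * q" by (rule dvdE)
  then have q: "a j = q * h j" by (simp only: mult.commute)
  let ?rest = "\<lambda>t. (\<Sum>i\<in>{Suc j..<k}. a i * G i t) mod f"
  have "w = Asmult f q (Asmult f (h j) (G j)) + ?rest"
    using j by (simp add: a q Asmult_def fun_eq_iff sum.atLeast_Suc_lessThan poly_mod_add_left
        mod_mult_right_eq mult.assoc)
  moreover have "Asmult f q (Asmult f (h j) (G j)) \<in> Aspan f G {Suc j..<k}"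
    using h_rows[OF j] by (simp add: Aspan_Asmult atLeastSucLessThan_greaterThanLessThan)
  moreover have "?rest \<in> Aspan f G {Suc j..<k}" by (rule AspanI)
  ultimately show ?thesis by (simp add: Aspan_add)
qed

lemma subcode_eq_Aspan_from: "j \<le> k \<Longrightarrow> subcode C j = Aspan f G {j..<k}"
proof (induction j)
  case 0
  then show ?case by (simp add: C_eq atLeast0LessThan)
next
  case (Suc j)
  then have j: "j < k" by simp
  have Suc_iff: "c \<in> Aspan f G {Suc j..<k} \<longleftrightarrow> c \<in> Aspan f G {j..<k} \<and> enat (pivot j) < Lind c" for c
  proof
    assume c: "c \<in> Aspan f G {Suc j..<k}"
    have "c t = 0" if "t \<le> pivot j" for t
    proof (rule Aspan_vanishes[OF c])
      fix i assume "i \<in> {Suc j..<k}"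
      then have "pivot j < pivot i" by (intro pivot_less) auto
      with that have "t < pivot i" by simp
      then show "G i t = 0" by (rule row_before_pivot)
    qed
    then show "c \<in> Aspan f G {j..<k} \<and> enat (pivot j) < Lind c"
      using Aspan_mono[OF _ _ c, of "{j..<k}"] by (auto simp: enat_less_Lind_iff)
  next
    assume "c \<in> Aspan f G {j..<k} \<and> enat (pivot j) < Lind c"
    then show "c \<in> Aspan f G {Suc j..<k}" using Aspan_from_SucI[OF j] by (simp add: enat_less_Lind_iff)
  qed
  have "subcode C (Suc j) = {c \<in> Aspan f G {j..<k}. enat (pivot j) < Lind c}"
    using Suc.IH Suc.prems Lind_code_Aspan_from[OF j] by simp
  then show ?case using Suc_iff by blast
qed

lemma basis_of_divisors_if_h_rows_in_later_spans: "basis_of_divisors C k G"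
  unfolding basis_of_divisors_def
proof (intro conjI allI impI)
  fix j assume j: "j < k"
  show "nonzero_code (subcode C j)"
    using subcode_eq_Aspan_from[of j] j row_in_span[of "{j..<k}" j] row_nonzero[OF j]
    by (auto simp: nonzero_code_def)
  show "leading_element (subcode C j) (G j)"
    using subcode_eq_Aspan_from[of j] j leading_element_Aspan_from[OF j] by simp
qed (simp add: subcode_eq_Aspan_from Aspan_empty nonzero_code_def)

lemma Aspan_from_subset_lincomb_image:
  "j \<le> k \<Longrightarrow> Aspan f G {j..<k} \<subseteq> lincomb ` reduced_coeffs"
proof (induction j rule: inc_induct)
  case base
  have "restrict (\<lambda>_. 0) {..<k} \<in> reduced_coeffs" by (simp add: reduced_coeffs_def Aelems_def)
  moreover have "lincomb (restrict (\<lambda>_. 0) {..<k}) = 0"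
    by (simp add: lincomb_def fun_eq_iff)
  ultimately have "0 \<in> lincomb ` reduced_coeffs" by (metis image_eqI)
  then show ?case by (simp add: Aspan_empty)
next
  case (step n)
  show ?case
  proof
    fix v assume v: "v \<in> Aspan f G {n..<k}"
    obtain a where a: "v = (\<lambda>t. (\<Sum>i\<in>{n..<k}. a i * G i t) mod f)" using v by (rule AspanE)
    define \<rho> where "\<rho> = a n mod h n"
    define w where "w = v - Asmult f \<rho> (G n)"
    have "w \<in> Aspan f G {n..<k}"
      unfolding w_def using v step(2) by (intro Aspan_diff Aspan_Asmult row_in_span) auto
    moreover have "w (pivot n) = 0"
      using Aspan_from_pivot_entry[OF step(2), of a] mult_lc_mod[OF step(2), of \<rho>]
      by (simp add: w_def a \<rho>_def Asmult_def lc_eq)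
    ultimately have "w \<in> lincomb ` reduced_coeffs"
      using Aspan_from_SucI[OF step(2)] step(3) by blast
    then obtain r where r: "r \<in> reduced_coeffs" "w = lincomb r" by blast
    have "r(n := r n + \<rho>) \<in> reduced_coeffs"
      using r(1) step(2) by (auto simp: reduced_coeffs_def PiE_iff Aelems_def \<rho>_def poly_mod_add_left extensional_def)
    moreover have "v = lincomb (r(n := r n + \<rho>))"
      using r(2) lincomb_upd_add[OF step(2)] by (simp add: w_def diff_eq_eq)
    ultimately show "v \<in> lincomb ` reduced_coeffs" by blast
  qed
qed

lemma C_eq_lincomb_image: "C = lincomb ` reduced_coeffs"
  using Aspan_from_subset_lincomb_image[of 0] lincomb_in_C by (auto simp: C_eq atLeast0LessThan)

end

lemma h_rows_in_later_spans_iff_dimF: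
  "(\<forall>i<k. Asmult f (h i) (G i) \<in> Aspan f G {i<..<k}) \<longleftrightarrow> dimF C = (\<Sum>i<k. degree f - degree (lc i))"
proof -
  have card_C: "card C = card (UNIV :: 'a set) ^ dimF C" by (rule card_A_code[OF f_nonzero A_code_C])
  have q: "1 < card (UNIV :: 'a set)" using card_mono[of UNIV "{0, 1 :: 'a}"] by simp
  have finite_C: "finite C" using finite_Avecs[OF f_nonzero] A_code_C by (auto simp: A_code_def intro: finite_subset)
  show ?thesis
  proof
    assume "\<forall>i<k. Asmult f (h i) (G i) \<in> Aspan f G {i<..<k}"
    then have "C = lincomb ` reduced_coeffs" by (intro C_eq_lincomb_image) auto
    then show "dimF C = (\<Sum>i<k. degree f - degree (lc i))"
      using card_C card_lincomb_image power_inject_exp[OF q] by simp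
  next
    assume "dimF C = (\<Sum>i<k. degree f - degree (lc i))"
    then have "card (lincomb ` reduced_coeffs) = card C" using card_C card_lincomb_image by simp
    then have "lincomb ` reduced_coeffs = C"
      using card_subset_eq[OF finite_C] lincomb_in_C by blast
    then show "\<forall>i<k. Asmult f (h i) (G i) \<in> Aspan f G {i<..<k}"
      using h_row_in_later_span_if_lincomb_onto by blast
  qed
qed

end

theorem mainTheorem1:
  fixes f :: "'a::{finite,field} poly" and m k l :: nat
    and G :: "nat \<Rightarrow> nat \<Rightarrow> 'a poly" and C :: "(nat \<Rightarrow> 'a poly) set"
  assumes "lead_coeff f = 1" and "m = degree f"
    and "generator_matrix f k l G C"
    and "\<forall>i<k. monic_vec (G i)"
  shows "(basis_of_divisors C k G \<longleftrightarrow>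
            (\<forall>i j. i < j \<and> j < k \<longrightarrow> Lind (G i) < Lind (G j)) \<and>
            (\<forall>i<k. Lcoef (G i) dvd f) \<and>
            (\<forall>i<k. Asmult f (f div Lcoef (G i)) (G i) \<in> Aspan f G {i<..<k}))
       \<and> (basis_of_divisors C k G \<longleftrightarrow>
            (\<forall>i j. i < j \<and> j < k \<longrightarrow> Lind (G i) < Lind (G j)) \<and>
            (\<forall>i<k. Lcoef (G i) dvd f) \<and>
            dimF C = (\<Sum>i<k. m - degree (Lcoef (G i))))"
proof -
  interpret monic_generator_matrix f k l G C
    by unfold_locales (use assms in auto)
  let ?echelon = "\<forall>i j. i < j \<and> j < k \<longrightarrow> pivot i < pivot j"
  let ?iii = "\<forall>i<k. Asmult f (f div lc i) (G i) \<in> Aspan f G {i<..<k}"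
  have "Lind (G i) < Lind (G j) \<longleftrightarrow> pivot i < pivot j" if "i < j" "j < k" for i j
    using that Lind_row[of i] Lind_row[of j] by simp
  then have Lind_less_iff: "(\<forall>i j. i < j \<and> j < k \<longrightarrow> Lind (G i) < Lind (G j)) \<longleftrightarrow> ?echelon"
    by blast
  have necessary: "?echelon \<and> (\<forall>i<k. lc i dvd f) \<and> ?iii" if "basis_of_divisors C k G"
    using basis_of_divisors_pivot_less[OF that] basis_of_divisors_lc_dvd_f[OF that]
      basis_of_divisors_h_row_in_later_span[OF that] by blast
  have sufficient: "(?iii \<longrightarrow> basis_of_divisors C k G) \<and> (?iii \<longleftrightarrow> dimF C = (\<Sum>i<k. m - degree (lc i)))"
    if "?echelon" "\<forall>i<k. lc i dvd f"
  proof -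
    interpret echelon_generator_matrix f k l G C
      by unfold_locales (use that in auto)
    show ?thesis
      using basis_of_divisors_if_h_rows_in_later_spans h_rows_in_later_spans_iff_dimF assms(2) by auto
  qed
  show ?thesis using necessary sufficient Lind_less_iff by blast
qed

end
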